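(* Let $d\ge 3$ and let $G$ be a group with a faithful self-similar action on $\mathcal{T}_{d-1}$. Then for every $1\le i\le d$, $G$ admits a faithful action on $\mathcal{T}_d$ whose image in $\mathrm{Aut}(\mathcal{T}_d)$ is self-similar and $i$-persistent, and which is finite-state if the action on $\mathcal{T}_{d-1}$ is finite-state, and coarsely diagonal if the action on $\mathcal{T}_{d-1}$ is coarsely diagonal.
   Context: For $m\ge2$, $\mathcal{T}_m$ is the rooted $m$-ary tree with vertex set the finite words over $\{1,\dots,m\}$. Every $f\in\mathrm{Aut}(\mathcal{T}_m)$ has a wreath recursion $f=\rho(f)(f_1,\dots,f_m)$ with $\rho(f)\in S_m$ and $f_j\in\mathrm{Aut}(\mathcal{T}_m)$ determined by $f(jw)=\rho(f)(j)f_j(w)$; the $f_j$ are the level-1 states, and the states of $f$ form the smallest set containing $f$ and closed under taking level-1 states. A subset of $\mathrm{Aut}(\mathcal{T}_m)$ is self-similar if it contains all states of its elements; finite-state if each element has finitely many states. A subgroup $H$ is coarsely diagonal if $(h')^{-1}h$ has finite order for all $h\in H$ and states $h'$ of $h$; $h$ is $i$-persistent if $h_i=h$ in its wreath recursion, and $H$ is $i$-persistent if all its elements are. A group action on a tree is said to have one of these properties if it is faithful and its image in the automorphism group has the property. *)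

theory Defs
  imports "HOL-Algebra.Group" "HOL-Library.Sublist"
begin

definition words :: "nat \<Rightarrow> nat list set" where
  "words m = lists {1..m}"

text \<open>Automorphisms of the rooted m-ary tree, represented as functions on nat lists
  which are bijective on the vertex set, preserve word length and the prefix
  (ancestor) relation, and are the identity outside the vertex set (so that equality
  of automorphisms is equality of functions).\<close>
definition tree_aut :: "nat \<Rightarrow> (nat list \<Rightarrow> nat list) \<Rightarrow> bool" where
  "tree_aut m f \<longleftrightarrow>
     bij_betw f (words m) (words m) \<and>
     (\<forall>w\<in>words m. length (f w) = length w) \<and>
     (\<forall>u\<in>words m. \<forall>v\<in>words m. prefix (f u) (f (u @ v))) \<and>
     (\<forall>w. w \<notin> words m \<longrightarrow> f w = w)"

text \<open>Level-1 state f_j, determined by f(jw) = rho(f)(j) f_j(w).\<close>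
definition state :: "nat \<Rightarrow> (nat list \<Rightarrow> nat list) \<Rightarrow> nat \<Rightarrow> (nat list \<Rightarrow> nat list)" where
  "state m f j = (\<lambda>w. if w \<in> words m then tl (f (j # w)) else w)"

inductive_set states :: "nat \<Rightarrow> (nat list \<Rightarrow> nat list) \<Rightarrow> (nat list \<Rightarrow> nat list) set"
  for m f where
  self: "f \<in> states m f"
| step: "g \<in> states m f \<Longrightarrow> j \<in> {1..m} \<Longrightarrow> state m g j \<in> states m f"

definition self_similar :: "nat \<Rightarrow> (nat list \<Rightarrow> nat list) set \<Rightarrow> bool" where
  "self_similar m S \<longleftrightarrow> (\<forall>f\<in>S. states m f \<subseteq> S)"

definition finite_state :: "nat \<Rightarrow> (nat list \<Rightarrow> nat list) set \<Rightarrow> bool" where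
  "finite_state m S \<longleftrightarrow> (\<forall>f\<in>S. finite (states m f))"

definition coarsely_diagonal :: "nat \<Rightarrow> (nat list \<Rightarrow> nat list) set \<Rightarrow> bool" where
  "coarsely_diagonal m H \<longleftrightarrow>
     (\<forall>h\<in>H. \<forall>h'\<in>states m h. \<exists>n>0. (Hilbert_Choice.inv h' \<circ> h) ^^ n = id)"

definition persistent :: "nat \<Rightarrow> nat \<Rightarrow> (nat list \<Rightarrow> nat list) set \<Rightarrow> bool" where
  "persistent m i H \<longleftrightarrow> (\<forall>h\<in>H. state m h i = h)"

definition tree_action :: "nat \<Rightarrow> ('g, 'b) monoid_scheme \<Rightarrow> ('g \<Rightarrow> nat list \<Rightarrow> nat list) \<Rightarrow> bool" where
  "tree_action m G \<phi> \<longleftrightarrow>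
     (\<forall>g\<in>carrier G. tree_aut m (\<phi> g)) \<and>
     (\<forall>g\<in>carrier G. \<forall>h\<in>carrier G. \<phi> (g \<otimes>\<^bsub>G\<^esub> h) = \<phi> g \<circ> \<phi> h)"

definition faithful_action :: "nat \<Rightarrow> ('g, 'b) monoid_scheme \<Rightarrow> ('g \<Rightarrow> nat list \<Rightarrow> nat list) \<Rightarrow> bool" where
  "faithful_action m G \<phi> \<longleftrightarrow> tree_action m G \<phi> \<and> inj_on \<phi> (carrier G)"

end

theory Submission
  imports Defs
begin

text \<open>An automorphism f of the (d-1)-ary tree acts on the d-ary tree by ignoring the letter i:
  the letters i of a word stay in place, the remaining letters are renumbered onto {1..d-1},
  transformed by f, renumbered back and written into the same positions. This lift is an
  injective homomorphism into the automorphisms of the d-ary tree. Its level-1 state at i is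
  itself, and its state at any other letter is the lift of a level-1 state of f; hence the
  states of a lift are lifts of states, and self-similarity, finiteness of the state sets and
  coarse diagonality pass from f to its lift.\<close>

definition skip :: "nat \<Rightarrow> nat \<Rightarrow> nat" where
  "skip i j = (if j < i then j else Suc j)"

definition unskip :: "nat \<Rightarrow> nat \<Rightarrow> nat" where
  "unskip i a = (if a < i then a else a - 1)"

definition erase :: "nat \<Rightarrow> nat list \<Rightarrow> nat list" where
  "erase i w = map (unskip i) (filter (\<lambda>x. x \<noteq> i) w)"

fun fill :: "nat \<Rightarrow> nat list \<Rightarrow> nat list \<Rightarrow> nat list" where
  "fill i [] ys = []"
| "fill i (x # xs) ys = (if x = i then i # fill i xs ys else hd ys # fill i xs (tl ys))"

definition lift :: "nat \<Rightarrow> nat \<Rightarrow> (nat list \<Rightarrow> nat list) \<Rightarrow> nat list \<Rightarrow> nat list" where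
  "lift d i f w = (if w \<in> words d then fill i w (map (skip i) (f (erase i w))) else w)"

definition level_preserving :: "nat \<Rightarrow> (nat list \<Rightarrow> nat list) \<Rightarrow> bool" where
  "level_preserving m f \<longleftrightarrow> (\<forall>w\<in>words m. f w \<in> words m \<and> length (f w) = length w)"

lemma unskip_skip [simp]: "unskip i (skip i j) = j"
  by (simp add: unskip_def skip_def)

lemma skip_unskip: "a \<noteq> i \<Longrightarrow> skip i (unskip i a) = a"
  by (auto simp: unskip_def skip_def)

lemma skip_neq [simp]: "skip i j \<noteq> i"
  by (simp add: skip_def)

lemma map_unskip_skip [simp]: "map (unskip i) (map (skip i) xs) = xs"
  by (induction xs) auto

lemma erase_Nil [simp]: "erase i [] = []"
  and erase_Cons [simp]: "erase i (x # w) = (if x = i then erase i w else unskip i x # erase i w)"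
  and erase_append [simp]: "erase i (u @ v) = erase i u @ erase i v"
  by (simp_all add: erase_def)

lemma erase_map_skip [simp]: "erase i (map (skip i) w) = w"
  by (induction w) auto

lemma erase_in_words: "w \<in> words d \<Longrightarrow> i \<in> {1..d} \<Longrightarrow> erase i w \<in> words (d - 1)"
  by (induction w) (auto simp: words_def unskip_def)

lemma map_skip_in_words: "w \<in> words (d - 1) \<Longrightarrow> i \<in> {1..d} \<Longrightarrow> map (skip i) w \<in> words d"
  by (induction w) (auto simp: words_def skip_def)

lemma length_fill [simp]: "length (fill i w ys) = length w"
  by (induction w arbitrary: ys) auto

lemma fill_in_lists:
  "w \<in> lists A \<Longrightarrow> set ys \<subseteq> A \<Longrightarrow> length (erase i w) \<le> length ys \<Longrightarrow> i \<in> A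
   \<Longrightarrow> fill i w ys \<in> lists A"
proof (induction w arbitrary: ys)
  case (Cons x w)
  show ?case
  proof (cases "x = i")
    case False
    then show ?thesis using Cons by (cases ys) auto
  qed (use Cons in simp)
qed simp

lemma erase_fill:
  "length ys = length (erase i w) \<Longrightarrow> erase i (fill i w (map (skip i) ys)) = ys"
proof (induction w arbitrary: ys)
  case (Cons x w)
  show ?case
  proof (cases "x = i")
    case False
    then show ?thesis using Cons by (cases ys) auto
  qed (use Cons in simp)
qed simp

lemma fill_fill:
  "length ys = length (erase i w) \<Longrightarrow> fill i (fill i w (map (skip i) ys)) zs = fill i w zs"
proof (induction w arbitrary: ys zs)
  case (Cons x w)
  show ?case
  proof (cases "x = i")
    case False
    then show ?thesis using Cons by (cases ys) auto
  qed (use Cons in simp)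
qed simp

lemma fill_erase: "fill i w (map (skip i) (erase i w)) = w"
  by (induction w) (auto simp: skip_unskip)

lemma fill_append:
  "length ys = length (erase i u) \<Longrightarrow> fill i (u @ v) (ys @ zs) = fill i u ys @ fill i v zs"
proof (induction u arbitrary: ys)
  case (Cons x u)
  show ?case
  proof (cases "x = i")
    case False
    then show ?thesis using Cons by (cases ys) auto
  qed (use Cons in simp)
qed simp

lemma fill_map_skip:
  "length ys = length w \<Longrightarrow> fill i (map (skip i) w) ys = ys"
proof (induction w arbitrary: ys)
  case (Cons x w)
  then show ?case by (cases ys) auto
qed simp

lemma length_lift [simp]: "length (lift d i f w) = length w"
  by (simp add: lift_def)

lemma lift_outside_words: "w \<notin> words d \<Longrightarrow> lift d i f w = w"
  by (simp add: lift_def)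

lemma lift_in_words:
  assumes "level_preserving (d - 1) f" "i \<in> {1..d}" "w \<in> words d"
  shows "lift d i f w \<in> words d"
proof -
  have fw: "f (erase i w) \<in> words (d - 1)" and len: "length (f (erase i w)) = length (erase i w)"
    using assms erase_in_words by (auto simp: level_preserving_def)
  have "set (map (skip i) (f (erase i w))) \<subseteq> {1..d}"
    using map_skip_in_words[OF fw assms(2)] by (auto simp: words_def)
  then have "fill i w (map (skip i) (f (erase i w))) \<in> lists {1..d}"
    using assms(2,3) len by (intro fill_in_lists) (simp_all add: words_def)
  then show ?thesis
    using assms(3) by (simp add: lift_def words_def)
qed

lemma lift_comp:
  assumes "level_preserving (d - 1) g" "i \<in> {1..d}"
  shows "lift d i f \<circ> lift d i g = lift d i (f \<circ> g)"
proof
  fix w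
  show "(lift d i f \<circ> lift d i g) w = lift d i (f \<circ> g) w"
  proof (cases "w \<in> words d")
    case True
    then have len: "length (g (erase i w)) = length (erase i w)"
      using assms erase_in_words by (auto simp: level_preserving_def)
    have "erase i (lift d i g w) = g (erase i w)"
      using True erase_fill[OF len] by (simp add: lift_def)
    then show ?thesis
      using True lift_in_words[OF assms True] fill_fill[OF len] by (simp add: lift_def)
  qed (simp add: lift_def)
qed

lemma lift_id [simp]: "lift d i id = id"
  by (rule ext) (simp add: lift_def fill_erase)

lemma funpow_lift:
  assumes "level_preserving (d - 1) f" "i \<in> {1..d}"
  shows "lift d i f ^^ n = lift d i (f ^^ n)"
proof (induction n)
  case (Suc n)
  have "lift d i f ^^ Suc n = lift d i (f ^^ n) \<circ> lift d i f"
    by (simp only: funpow_Suc_right Suc)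
  also have "\<dots> = lift d i (f ^^ Suc n)"
    by (simp only: lift_comp[OF assms] funpow_Suc_right)
  finally show ?case .
qed (simp only: funpow.simps(1) lift_id)

lemma lift_map_skip:
  assumes "level_preserving (d - 1) f" "i \<in> {1..d}" "w \<in> words (d - 1)"
  shows "lift d i f (map (skip i) w) = map (skip i) (f w)"
  using assms map_skip_in_words[OF assms(3,2)]
  by (simp add: lift_def level_preserving_def fill_map_skip)

lemma lift_prefix:
  assumes "level_preserving (d - 1) f" "i \<in> {1..d}"
    and f_prefix: "\<forall>u\<in>words (d - 1). \<forall>v\<in>words (d - 1). prefix (f u) (f (u @ v))"
    and "u \<in> words d" "v \<in> words d"
  shows "prefix (lift d i f u) (lift d i f (u @ v))"
proof -
  have eu: "erase i u \<in> words (d - 1)" and ev: "erase i v \<in> words (d - 1)"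
    using assms erase_in_words by auto
  obtain r where r: "f (erase i u @ erase i v) = f (erase i u) @ r"
    using f_prefix eu ev by (auto simp: prefix_def)
  have len: "length (map (skip i) (f (erase i u))) = length (erase i u)"
    using assms(1) eu by (simp add: level_preserving_def)
  have "lift d i f (u @ v) = lift d i f u @ fill i v (map (skip i) r)"
    using assms(4,5) r fill_append[OF len] by (simp add: lift_def words_def)
  then show ?thesis by simp
qed

lemma state_lift_self:
  assumes "i \<in> {1..d}"
  shows "state d (lift d i f) i = lift d i f"
proof
  fix w
  show "state d (lift d i f) i w = lift d i f w"
    using assms by (simp add: state_def lift_def words_def)
qed

lemma state_lift:
  assumes "i \<in> {1..d}" "j \<in> {1..d}" "j \<noteq> i"
  shows "state d (lift d i f) j = lift d i (state (d - 1) f (unskip i j))"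
proof
  fix w
  show "state d (lift d i f) j w = lift d i (state (d - 1) f (unskip i j)) w"
  proof (cases "w \<in> words d")
    case True
    then have "j # w \<in> words d" "erase i w \<in> words (d - 1)"
      using assms erase_in_words by (auto simp: words_def)
    then show ?thesis
      using True assms by (simp add: state_def lift_def map_tl)
  qed (simp add: state_def lift_def)
qed

lemma states_lift:
  assumes "i \<in> {1..d}"
  shows "states d (lift d i f) \<subseteq> lift d i ` states (d - 1) f"
proof
  fix g
  assume "g \<in> states d (lift d i f)"
  then show "g \<in> lift d i ` states (d - 1) f"
  proof (induction rule: states.induct)
    case (step g j)
    then obtain f' where f': "f' \<in> states (d - 1) f" "g = lift d i f'"
      by blast
    show ?case
    proof (cases "j = i")
      case False
      then have "unskip i j \<in> {1..d - 1}"
        using assms step.hyps(2) by (auto simp: unskip_def)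
      then show ?thesis
        using f' state_lift[OF assms step.hyps(2) False] states.step[OF f'(1)] by blast
    qed (use f' state_lift_self[OF assms] in auto)
  qed (use states.self in blast)
qed

lemma level_preserving_comp:
  "level_preserving m f \<Longrightarrow> level_preserving m g \<Longrightarrow> level_preserving m (f \<circ> g)"
  by (simp add: level_preserving_def)

lemma tree_aut_level_preserving: "tree_aut m f \<Longrightarrow> level_preserving m f"
  by (auto simp: tree_aut_def level_preserving_def bij_betw_def)

lemma lift_inject:
  assumes "tree_aut (d - 1) f" "tree_aut (d - 1) g" "i \<in> {1..d}"
    and "lift d i f = lift d i g"
  shows "f = g"
proof
  fix w
  show "f w = g w"
  proof (cases "w \<in> words (d - 1)")
    case True
    then have "map (skip i) (f w) = map (skip i) (g w)"
      using lift_map_skip[OF tree_aut_level_preserving[OF assms(1)] assms(3)]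
        lift_map_skip[OF tree_aut_level_preserving[OF assms(2)] assms(3)] assms(4)
      by metis
    then show ?thesis by (metis map_unskip_skip)
  qed (use assms in \<open>simp add: tree_aut_def\<close>)
qed

lemma tree_aut_bij:
  assumes "tree_aut m f"
  shows "bij f"
proof -
  have bij: "bij_betw f (words m) (words m)" and out: "\<And>w. w \<notin> words m \<Longrightarrow> f w = w"
    using assms by (auto simp: tree_aut_def)
  have "bij_betw f (- words m) (- words m)"
    using out by (simp add: bij_betw_def inj_on_def image_def)
  then have "bij_betw f (words m \<union> - words m) (words m \<union> - words m)"
    using bij_betw_combine[OF bij] by blast
  then show ?thesis
    by simp
qed

lemma level_preserving_inv:
  assumes "tree_aut m f"
  shows "level_preserving m (Hilbert_Choice.inv f)"
  unfolding level_preserving_def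
proof
  fix w
  assume "w \<in> words m"
  then have "w \<in> f ` words m"
    using assms by (simp add: tree_aut_def bij_betw_def)
  then obtain x where x: "x \<in> words m" "w = f x"
    by blast
  moreover have "Hilbert_Choice.inv f (f x) = x"
    using tree_aut_bij[OF assms] by (simp add: bij_def)
  ultimately show "Hilbert_Choice.inv f w \<in> words m \<and> length (Hilbert_Choice.inv f w) = length w"
    using assms by (simp add: tree_aut_def)
qed

lemma lift_inv_cancel:
  assumes "tree_aut (d - 1) f" "i \<in> {1..d}"
  shows "lift d i (Hilbert_Choice.inv f) \<circ> lift d i f = id"
    and "lift d i f \<circ> lift d i (Hilbert_Choice.inv f) = id"
proof -
  have "bij f" using tree_aut_bij[OF assms(1)] .
  then have "Hilbert_Choice.inv f \<circ> f = id" "f \<circ> Hilbert_Choice.inv f = id"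
    by (simp_all add: bij_def surj_iff inj_iff)
  then show "lift d i (Hilbert_Choice.inv f) \<circ> lift d i f = id"
    and "lift d i f \<circ> lift d i (Hilbert_Choice.inv f) = id"
    by (simp_all add: lift_comp[OF tree_aut_level_preserving[OF assms(1)] assms(2)]
        lift_comp[OF level_preserving_inv[OF assms(1)] assms(2)])
qed

lemma inv_lift:
  assumes "tree_aut (d - 1) f" "i \<in> {1..d}"
  shows "Hilbert_Choice.inv (lift d i f) = lift d i (Hilbert_Choice.inv f)"
  using lift_inv_cancel[OF assms] by (intro inv_equality) (simp_all add: pointfree_idE)

lemma tree_aut_lift:
  assumes "tree_aut (d - 1) f" "i \<in> {1..d}"
  shows "tree_aut d (lift d i f)"
  unfolding tree_aut_def
proof (intro conjI ballI allI impI)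
  show "bij_betw (lift d i f) (words d) (words d)"
  proof (rule bij_betw_byWitness[where f' = "lift d i (Hilbert_Choice.inv f)"])
    show "lift d i f ` words d \<subseteq> words d"
      using lift_in_words[OF tree_aut_level_preserving[OF assms(1)] assms(2)] by blast
    show "lift d i (Hilbert_Choice.inv f) ` words d \<subseteq> words d"
      using lift_in_words[OF level_preserving_inv[OF assms(1)] assms(2)] by blast
  qed (use lift_inv_cancel[OF assms] pointfree_idE in metis)+
  show "prefix (lift d i f u) (lift d i f (u @ v))" if "u \<in> words d" "v \<in> words d" for u v
    using lift_prefix[OF tree_aut_level_preserving[OF assms(1)] assms(2) _ that] assms(1)
    by (simp add: tree_aut_def)
qed (simp_all add: lift_outside_words)

lemma faithful_action_lift:
  assumes "faithful_action (d - 1) G \<phi>" "i \<in> {1..d}"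
  shows "faithful_action d G (\<lambda>g. lift d i (\<phi> g))"
proof -
  have aut: "tree_aut (d - 1) (\<phi> g)" if "g \<in> carrier G" for g
    using assms(1) that by (simp add: faithful_action_def tree_action_def)
  have hom: "\<phi> (x \<otimes>\<^bsub>G\<^esub> y) = \<phi> x \<circ> \<phi> y" if "x \<in> carrier G" "y \<in> carrier G" for x y
    using assms(1) that by (simp add: faithful_action_def tree_action_def)
  have "tree_action d G (\<lambda>g. lift d i (\<phi> g))"
    unfolding tree_action_def
    using aut hom tree_aut_lift[OF _ assms(2)] lift_comp[OF tree_aut_level_preserving assms(2)]
    by simp
  moreover have "inj_on (\<lambda>g. lift d i (\<phi> g)) (carrier G)"
  proof (rule inj_onI)
    fix x y
    assume xy: "x \<in> carrier G" "y \<in> carrier G" "lift d i (\<phi> x) = lift d i (\<phi> y)"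
    then have "\<phi> x = \<phi> y"
      using lift_inject[OF aut aut assms(2)] by blast
    then show "x = y"
      using assms(1) xy by (auto simp: faithful_action_def inj_on_def)
  qed
  ultimately show ?thesis
    by (simp add: faithful_action_def)
qed

lemma self_similar_lift:
  assumes "self_similar (d - 1) S" "i \<in> {1..d}"
  shows "self_similar d (lift d i ` S)"
  unfolding self_similar_def
proof
  fix h
  assume "h \<in> lift d i ` S"
  then obtain f where "f \<in> S" "h = lift d i f"
    by blast
  moreover have "states (d - 1) f \<subseteq> S"
    using assms(1) \<open>f \<in> S\<close> by (simp add: self_similar_def)
  ultimately show "states d h \<subseteq> lift d i ` S"
    using states_lift[OF assms(2), of f] by blast
qed

lemma persistent_lift: "i \<in> {1..d} \<Longrightarrow> persistent d i (lift d i ` S)"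
  by (auto simp: persistent_def state_lift_self)

lemma finite_state_lift:
  "finite_state (d - 1) S \<Longrightarrow> i \<in> {1..d} \<Longrightarrow> finite_state d (lift d i ` S)"
  by (auto simp: finite_state_def intro: finite_subset[OF states_lift])

lemma coarsely_diagonal_lift:
  assumes "\<forall>f\<in>S. tree_aut (d - 1) f" "self_similar (d - 1) S" "coarsely_diagonal (d - 1) S"
    and "i \<in> {1..d}"
  shows "coarsely_diagonal d (lift d i ` S)"
  unfolding coarsely_diagonal_def
proof (intro ballI)
  fix h h'
  assume "h \<in> lift d i ` S" "h' \<in> states d h"
  then obtain f f' where f: "f \<in> S" "h = lift d i f" and f': "f' \<in> states (d - 1) f" "h' = lift d i f'"
    using states_lift[OF assms(4)] by blast
  have aut: "tree_aut (d - 1) f" "tree_aut (d - 1) f'"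
    using assms(1,2) f f' by (auto simp: self_similar_def)
  obtain n where n: "n > 0" "(Hilbert_Choice.inv f' \<circ> f) ^^ n = id"
    using assms(3) f f' by (auto simp: coarsely_diagonal_def)
  have lp: "level_preserving (d - 1) (Hilbert_Choice.inv f' \<circ> f)"
    using aut level_preserving_comp level_preserving_inv tree_aut_level_preserving by blast
  have "Hilbert_Choice.inv h' \<circ> h = lift d i (Hilbert_Choice.inv f' \<circ> f)"
    using f f' inv_lift[OF aut(2) assms(4)] lift_comp[OF tree_aut_level_preserving[OF aut(1)] assms(4)]
    by simp
  then have "(Hilbert_Choice.inv h' \<circ> h) ^^ n = id"
    using funpow_lift[OF lp assms(4)] n(2) by simp
  then show "\<exists>n>0. (Hilbert_Choice.inv h' \<circ> h) ^^ n = id"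
    using n(1) by blast
qed

theorem lemma5p3:
  fixes G :: "('g, 'b) monoid_scheme" and d :: nat and \<phi> :: "'g \<Rightarrow> nat list \<Rightarrow> nat list"
  assumes "d \<ge> 3" and "group G"
    and "faithful_action (d - 1) G \<phi>"
    and "self_similar (d - 1) (\<phi> ` carrier G)"
  shows "\<forall>i\<in>{1..d}. \<exists>\<psi> :: 'g \<Rightarrow> nat list \<Rightarrow> nat list.
           faithful_action d G \<psi> \<and>
           self_similar d (\<psi> ` carrier G) \<and>
           persistent d i (\<psi> ` carrier G) \<and>
           (finite_state (d - 1) (\<phi> ` carrier G) \<longrightarrow> finite_state d (\<psi> ` carrier G)) \<and>
           (coarsely_diagonal (d - 1) (\<phi> ` carrier G) \<longrightarrow> coarsely_diagonal d (\<psi> ` carrier G))"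
proof
  fix i
  assume i: "i \<in> {1..d}"
  have image: "(\<lambda>g. lift d i (\<phi> g)) ` carrier G = lift d i ` \<phi> ` carrier G"
    by (simp add: image_image)
  have aut: "\<forall>f\<in>\<phi> ` carrier G. tree_aut (d - 1) f"
    using assms(3) by (auto simp: faithful_action_def tree_action_def)
  show "\<exists>\<psi>. faithful_action d G \<psi> \<and>
           self_similar d (\<psi> ` carrier G) \<and>
           persistent d i (\<psi> ` carrier G) \<and>
           (finite_state (d - 1) (\<phi> ` carrier G) \<longrightarrow> finite_state d (\<psi> ` carrier G)) \<and>
           (coarsely_diagonal (d - 1) (\<phi> ` carrier G) \<longrightarrow> coarsely_diagonal d (\<psi> ` carrier G))"
    using faithful_action_lift[OF assms(3) i] self_similar_lift[OF assms(4) i] persistent_lift[OF i]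
      finite_state_lift[OF _ i] coarsely_diagonal_lift[OF aut assms(4) _ i]
    by (intro exI[of _ "\<lambda>g. lift d i (\<phi> g)"] conjI impI) (simp_all add: image)
qed

end
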